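(* Let $\Delta\ge1$, $p\ge1$ and $\alpha$ be positive integers. There is an infinite family of graphs of maximum degree $\Delta$ and an absolute constant $C>0$ such that for every graph $G=(V,E)$ in the family and every assignment of nonempty sets $L(v)\subseteq\{1,\dots,\alpha\}$ to vertices $v\in V$ with the property that every choice of one color $\ell_v\in L(v)$ for each $v$ yields a $p$-defective $\alpha$-coloring of $G$, we have $\min_{v\in V}|L(v)|\le C\alpha p/\Delta$, i.e. the solution domain has size $O(\alpha\cdot p/\Delta)$; consequently the contingency factor $\alpha/\min_v|L(v)|$ is $\Omega(\Delta/p)$.
   Context: A map $\varphi:V\to\{1,\dots,\alpha\}$ is a $p$-defective $\alpha$-coloring of $G=(V,E)$ if every vertex $v$ has at most $p$ neighbors $u$ with $\varphi(u)=\varphi(v)$. Solution domain size $=\min_v|L(v)|$; contingency factor $=\alpha/\min_v|L(v)|$. *)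

theory Defs
  imports Complex_Main
begin

definition simple_graph :: "nat set \<Rightarrow> (nat \<Rightarrow> nat \<Rightarrow> bool) \<Rightarrow> bool" where
  "simple_graph V E \<longleftrightarrow> finite V \<and> (\<forall>u v. E u v \<longrightarrow> u \<in> V \<and> v \<in> V)
     \<and> (\<forall>u v. E u v \<longrightarrow> E v u) \<and> (\<forall>v. \<not> E v v)"

definition degree :: "nat set \<Rightarrow> (nat \<Rightarrow> nat \<Rightarrow> bool) \<Rightarrow> nat \<Rightarrow> nat" where
  "degree V E v = card {u \<in> V. E v u}"

definition max_degree :: "nat set \<Rightarrow> (nat \<Rightarrow> nat \<Rightarrow> bool) \<Rightarrow> nat" where
  "max_degree V E = Max (degree V E ` V)"

definition defective_coloring ::
  "nat set \<Rightarrow> (nat \<Rightarrow> nat \<Rightarrow> bool) \<Rightarrow> nat \<Rightarrow> nat \<Rightarrow> (nat \<Rightarrow> nat) \<Rightarrow> bool" where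
  "defective_coloring V E p \<alpha> \<phi> \<longleftrightarrow>
     (\<forall>v\<in>V. \<phi> v \<in> {1..\<alpha>}) \<and>
     (\<forall>v\<in>V. card {u \<in> V. E v u \<and> \<phi> u = \<phi> v} \<le> p)"

definition valid_domain ::
  "nat set \<Rightarrow> (nat \<Rightarrow> nat \<Rightarrow> bool) \<Rightarrow> nat \<Rightarrow> nat \<Rightarrow> (nat \<Rightarrow> nat set) \<Rightarrow> bool" where
  "valid_domain V E p \<alpha> L \<longleftrightarrow>
     (\<forall>v\<in>V. L v \<noteq> {} \<and> L v \<subseteq> {1..\<alpha>}) \<and>
     (\<forall>\<phi>. (\<forall>v\<in>V. \<phi> v \<in> L v) \<longrightarrow> defective_coloring V E p \<alpha> \<phi>)"

definition domain_size :: "nat set \<Rightarrow> (nat \<Rightarrow> nat set) \<Rightarrow> nat" where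
  "domain_size V L = Min ((\<lambda>v. card (L v)) ` V)"

end

theory Submission
  imports Defs
begin

text \<open>Let \<open>m\<close> be the domain size and take a clique \<open>K\<close> of \<open>\<Delta> + 1\<close> vertices. The lists on
  \<open>K\<close> contain at least \<open>(\<Delta> + 1) m\<close> colors in total, so some color \<open>c\<close> lies in the lists of at
  least \<open>(\<Delta> + 1) m / \<alpha>\<close> vertices of \<open>K\<close>. Choosing \<open>c\<close> at all of them is allowed, and makes them
  a monochromatic clique, so there are at most \<open>p + 1\<close> of them. Hence
  \<open>m \<le> \<alpha> (p + 1) / (\<Delta> + 1) \<le> 2 \<alpha> p / \<Delta>\<close> on every disjoint union of copies of \<open>K\<^bsub>\<Delta>+1\<^esub>\<close>.\<close>

lemma domain_size_le_card:
  assumes "finite V" "v \<in> V"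
  shows "domain_size V L \<le> card (L v)"
  unfolding domain_size_def using assms by simp

lemma valid_domain_common_color_clique:
  assumes vd: "valid_domain V E p \<alpha> L" and "finite V" and "S \<subseteq> V"
    and clique: "\<forall>u\<in>S. \<forall>v\<in>S. u \<noteq> v \<longrightarrow> E u v"
    and common: "\<forall>v\<in>S. c \<in> L v"
  shows "card S \<le> Suc p"
proof (cases "S = {}")
  case False
  then obtain v where v: "v \<in> S" by blast
  define \<phi> where "\<phi> u = (if c \<in> L u then c else (SOME x. x \<in> L u))" for u
  have "\<phi> u \<in> L u" if "u \<in> V" for u
    using vd that some_in_eq[of "L u"] unfolding valid_domain_def \<phi>_def by auto
  then have "defective_coloring V E p \<alpha> \<phi>"
    using vd unfolding valid_domain_def by blast
  then have "card {u \<in> V. E v u \<and> \<phi> u = \<phi> v} \<le> p"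
    using v \<open>S \<subseteq> V\<close> unfolding defective_coloring_def by blast
  moreover have "card (S - {v}) \<le> card {u \<in> V. E v u \<and> \<phi> u = \<phi> v}"
  proof (rule card_mono)
    show "S - {v} \<subseteq> {u \<in> V. E v u \<and> \<phi> u = \<phi> v}"
      using v clique common \<open>S \<subseteq> V\<close> unfolding \<phi>_def by auto
  qed (use \<open>finite V\<close> in simp)
  moreover have "finite S"
    using \<open>finite V\<close> \<open>S \<subseteq> V\<close> finite_subset by blast
  ultimately show ?thesis
    using v by (simp add: card_Diff_singleton)
qed simp

lemma sum_card_lists_eq_sum_card_holders:
  assumes "finite K" "\<forall>v\<in>K. L v \<subseteq> C" "finite C"
  shows "(\<Sum>v\<in>K. card (L v)) = (\<Sum>c\<in>C. card {v \<in> K. c \<in> L v})"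
proof -
  have "(\<Sum>c\<in>C. card {v \<in> K. c \<in> L v}) = (\<Sum>v\<in>K. card {c \<in> C. c \<in> L v})"
    using assms by (intro sum_multicount_gen) auto
  also have "\<dots> = (\<Sum>v\<in>K. card (L v))"
    using assms(2) by (intro sum.cong refl arg_cong[where f = card]) blast
  finally show ?thesis by simp
qed

lemma sum_le_card_mult_max_term:
  fixes f :: "'a \<Rightarrow> nat"
  assumes "finite A" "A \<noteq> {}"
  obtains c where "c \<in> A" "sum f A \<le> card A * f c"
proof -
  have "Max (f ` A) \<in> f ` A"
    using assms by simp
  then obtain c where "c \<in> A" "f c = Max (f ` A)"
    by force
  moreover have "sum f A \<le> card A * Max (f ` A)"
    using sum_bounded_above[of A f "Max (f ` A)"] assms(1) by simp
  ultimately show thesis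
    using that by simp
qed

lemma clique_card_mult_domain_size_le:
  assumes vd: "valid_domain V E p \<alpha> L" and "finite V" and "K \<subseteq> V"
    and clique: "\<forall>u\<in>K. \<forall>v\<in>K. u \<noteq> v \<longrightarrow> E u v"
  shows "card K * domain_size V L \<le> \<alpha> * Suc p"
proof (cases "K = {}")
  case False
  have lists: "\<forall>v\<in>V. L v \<noteq> {} \<and> L v \<subseteq> {1..\<alpha>}"
    using vd unfolding valid_domain_def by blast
  have "finite K"
    using \<open>finite V\<close> \<open>K \<subseteq> V\<close> finite_subset by blast
  have "{1..\<alpha>} \<noteq> {}"
    using False \<open>K \<subseteq> V\<close> lists by blast
  have "card K * domain_size V L = (\<Sum>v\<in>K. domain_size V L)"
    by simp
  also have "\<dots> \<le> (\<Sum>v\<in>K. card (L v))"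
    using \<open>finite V\<close> \<open>K \<subseteq> V\<close> by (intro sum_mono domain_size_le_card) auto
  also have "\<dots> = (\<Sum>c\<in>{1..\<alpha>}. card {v \<in> K. c \<in> L v})"
    using \<open>finite K\<close> \<open>K \<subseteq> V\<close> lists by (intro sum_card_lists_eq_sum_card_holders) auto
  also obtain c
    where "(\<Sum>c\<in>{1..\<alpha>}. card {v \<in> K. c \<in> L v}) \<le> card {1..\<alpha>} * card {v \<in> K. c \<in> L v}"
    using sum_le_card_mult_max_term[OF finite_atLeastAtMost \<open>{1..\<alpha>} \<noteq> {}\<close>] by blast
  also have "\<dots> \<le> \<alpha> * Suc p"
    unfolding card_atLeastAtMost diff_Suc_1
  proof (rule mult_le_mono2, rule valid_domain_common_color_clique[OF vd \<open>finite V\<close>])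
    show "{v \<in> K. c \<in> L v} \<subseteq> V"
      using \<open>K \<subseteq> V\<close> by blast
  qed (use clique in auto)
  finally show ?thesis .
qed simp

text \<open>\<open>k\<close> disjoint copies of \<open>K\<^sub>n\<close>, the \<open>q\<close>-th one on the vertices \<open>{q n..<q n + n}\<close>.\<close>

definition clique_union_vertices :: "nat \<Rightarrow> nat \<Rightarrow> nat set" where
  "clique_union_vertices k n = {0..<k * n}"

definition clique_union_adj :: "nat \<Rightarrow> nat \<Rightarrow> nat \<Rightarrow> nat \<Rightarrow> bool" where
  "clique_union_adj k n u v \<longleftrightarrow> u < k * n \<and> v < k * n \<and> u \<noteq> v \<and> u div n = v div n"

lemma div_fiber_eq_atLeastLessThan:
  fixes n q :: nat
  assumes "n > 0"
  shows "{u. u div n = q} = {q * n..<q * n + n}"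
proof (intro set_eqI iffI)
  fix u assume "u \<in> {u. u div n = q}"
  then show "u \<in> {q * n..<q * n + n}"
    using div_times_less_eq_dividend[of u n] dividend_less_div_times[OF assms, of u] by auto
qed (auto intro: div_nat_eqI simp: mult.commute)

lemma card_clique_union_vertices: "card (clique_union_vertices k n) = k * n"
  by (simp add: clique_union_vertices_def)

lemma simple_graph_clique_union:
  "simple_graph (clique_union_vertices k n) (clique_union_adj k n)"
  unfolding simple_graph_def clique_union_vertices_def clique_union_adj_def
  by (intro conjI allI impI) simp_all

lemma degree_clique_union:
  assumes "v \<in> clique_union_vertices k n"
  shows "degree (clique_union_vertices k n) (clique_union_adj k n) v = n - 1"
proof -
  define q where "q = v div n"
  have "v < k * n"
    using assms by (simp add: clique_union_vertices_def)
  then have "n > 0"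
    by (cases n) auto
  have block: "{u. u div n = q} = {q * n..<q * n + n}"
    using \<open>n > 0\<close> by (rule div_fiber_eq_atLeastLessThan)
  have "q < k"
    using \<open>v < k * n\<close> \<open>n > 0\<close> by (simp add: q_def div_less_iff_less_mult)
  then have "q * n + n \<le> k * n"
    using mult_le_mono1[of "Suc q" k n] by simp
  then have "{u. u div n = q} \<subseteq> clique_union_vertices k n"
    unfolding block clique_union_vertices_def by auto
  then have "{u \<in> clique_union_vertices k n. clique_union_adj k n v u} = {u. u div n = q} - {v}"
    unfolding clique_union_adj_def clique_union_vertices_def q_def by auto
  moreover have "v \<in> {u. u div n = q}"
    by (simp add: q_def)
  ultimately show ?thesis
    by (simp add: degree_def block)
qed

lemma max_degree_clique_union:
  assumes "k \<ge> 1" "n \<ge> 1"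
  shows "max_degree (clique_union_vertices k n) (clique_union_adj k n) = n - 1"
proof -
  have "clique_union_vertices k n \<noteq> {}"
    using assms by (auto simp: clique_union_vertices_def)
  then have "degree (clique_union_vertices k n) (clique_union_adj k n) ` clique_union_vertices k n = {n - 1}"
    using degree_clique_union by auto
  then show ?thesis
    by (simp add: max_degree_def)
qed

lemma domain_size_clique_union_le:
  assumes "valid_domain (clique_union_vertices k n) (clique_union_adj k n) p \<alpha> L" "k \<ge> 1"
  shows "n * domain_size (clique_union_vertices k n) L \<le> \<alpha> * Suc p"
proof -
  have "n \<le> k * n"
    using \<open>k \<ge> 1\<close> by simp
  then have first_block: "{0..<n} \<subseteq> clique_union_vertices k n"
    by (auto simp: clique_union_vertices_def)
  have "card {0..<n} * domain_size (clique_union_vertices k n) L \<le> \<alpha> * Suc p"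
  proof (rule clique_card_mult_domain_size_le[OF assms(1) _ first_block])
    show "\<forall>u\<in>{0..<n}. \<forall>v\<in>{0..<n}. u \<noteq> v \<longrightarrow> clique_union_adj k n u v"
      using \<open>n \<le> k * n\<close> by (auto simp: clique_union_adj_def intro: order_less_le_trans)
  qed (simp add: clique_union_vertices_def)
  then show ?thesis
    by simp
qed

lemma domain_size_clique_union_le_real:
  assumes "valid_domain (clique_union_vertices k (Suc \<Delta>)) (clique_union_adj k (Suc \<Delta>)) p \<alpha> L"
    and "k \<ge> 1" "\<Delta> \<ge> 1" "p \<ge> 1"
  shows "real (domain_size (clique_union_vertices k (Suc \<Delta>)) L) \<le> 2 * real \<alpha> * real p / real \<Delta>"
proof -
  have "\<Delta> * domain_size (clique_union_vertices k (Suc \<Delta>)) L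
      \<le> Suc \<Delta> * domain_size (clique_union_vertices k (Suc \<Delta>)) L"
    by simp
  also have "\<dots> \<le> \<alpha> * Suc p"
    using domain_size_clique_union_le[OF assms(1,2)] .
  also have "\<dots> \<le> 2 * \<alpha> * p"
    using \<open>p \<ge> 1\<close> by simp
  finally have "real (\<Delta> * domain_size (clique_union_vertices k (Suc \<Delta>)) L) \<le> real (2 * \<alpha> * p)"
    by (simp only: of_nat_le_iff)
  then show ?thesis
    using \<open>\<Delta> \<ge> 1\<close> by (simp add: pos_le_divide_eq mult.commute)
qed

theorem theorem4:
  "\<exists>C::real. C > 0 \<and>
    (\<forall>\<Delta> p \<alpha> :: nat. \<Delta> \<ge> 1 \<longrightarrow> p \<ge> 1 \<longrightarrow> \<alpha> \<ge> 1 \<longrightarrow>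
      (\<exists>\<F> :: (nat set \<times> (nat \<Rightarrow> nat \<Rightarrow> bool)) set.
         (\<forall>N. \<exists>(V, E) \<in> \<F>. card V \<ge> N) \<and>
         (\<forall>(V, E) \<in> \<F>. simple_graph V E \<and> V \<noteq> {} \<and> max_degree V E = \<Delta> \<and>
            (\<forall>L. valid_domain V E p \<alpha> L \<longrightarrow>
               real (domain_size V L) \<le> C * real \<alpha> * real p / real \<Delta>))))"
proof (intro exI[of _ 2] conjI allI impI)
  fix \<Delta> p \<alpha> :: nat
  assume "\<Delta> \<ge> 1" "p \<ge> 1" "\<alpha> \<ge> 1"
  let ?G = "\<lambda>k. (clique_union_vertices k (Suc \<Delta>), clique_union_adj k (Suc \<Delta>))"
  show "\<exists>\<F>. (\<forall>N. \<exists>(V, E) \<in> \<F>. card V \<ge> N) \<and>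
      (\<forall>(V, E) \<in> \<F>. simple_graph V E \<and> V \<noteq> {} \<and> max_degree V E = \<Delta> \<and>
         (\<forall>L. valid_domain V E p \<alpha> L \<longrightarrow>
            real (domain_size V L) \<le> 2 * real \<alpha> * real p / real \<Delta>))"
  proof (intro exI[of _ "?G ` {1..}"] conjI allI ballI)
    fix N
    have "?G (Suc N) \<in> ?G ` {1..}" "N \<le> card (clique_union_vertices (Suc N) (Suc \<Delta>))"
      by (simp_all add: card_clique_union_vertices)
    then show "\<exists>(V, E) \<in> ?G ` {1..}. card V \<ge> N"
      by blast
  next
    fix G assume "G \<in> ?G ` {1..}"
    then obtain k where "k \<ge> 1" "G = ?G k"
      by auto
    moreover have "clique_union_vertices k (Suc \<Delta>) \<noteq> {}"
      using card_clique_union_vertices[of k "Suc \<Delta>"] \<open>k \<ge> 1\<close> by force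
    ultimately show "case G of (V, E) \<Rightarrow> simple_graph V E \<and> V \<noteq> {} \<and> max_degree V E = \<Delta> \<and>
        (\<forall>L. valid_domain V E p \<alpha> L \<longrightarrow>
           real (domain_size V L) \<le> 2 * real \<alpha> * real p / real \<Delta>)"
      using simple_graph_clique_union max_degree_clique_union[OF \<open>k \<ge> 1\<close>, of "Suc \<Delta>"]
        domain_size_clique_union_le_real[OF _ \<open>k \<ge> 1\<close> \<open>\<Delta> \<ge> 1\<close> \<open>p \<ge> 1\<close>]
      by simp
  qed
qed simp

end
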